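(* Let $G(r,z)$ be a real symmetric $(D-2)\times(D-2)$ matrix-valued function on $\{r\ge 0\}$, continuous, with $|\det G|=r^2$, satisfying $G^{-1}\vec\nabla^2G=(G^{-1}\vec\nabla G)^2$ for $r>0$, and such that $G$ and its derivatives remain finite as $r\to0$ (except possibly at isolated values of $z$). Let $[z_1,z_2]$ be a rod of $G$, i.e. an interval of the $z$-axis such that $\dim\ker G(0,z)=1$ for all $z\in\,]z_1,z_2[$ (bounded by consecutive isolated values of $z$ where this fails). Then there exists a constant orthogonal matrix $\Lambda_*$ such that $\tilde G(r,z)=\Lambda_*^TG(r,z)\Lambda_*$ satisfies $\tilde G_{1i}(0,z)=0$ for all $i=1,\dots,D-2$ and all $z\in[z_1,z_2]$.
   Context: Here $\vec\nabla^2=\partial_r^2+\frac1r\partial_r+\partial_z^2$ and $(G^{-1}\vec\nabla G)^2=(G^{-1}\partial_rG)^2+(G^{-1}\partial_zG)^2$ (gradient of a flat 3D Euclidean space $dr^2+r^2d\gamma^2+dz^2$ acting on axisymmetric fields). Rods: the $z$-axis at $r=0$ is divided by isolated points $a_1<\dots<a_N$, at which $\dim\ker G(0,z)\neq1$, into intervals $[-\infty,a_1],[a_1,a_2],\dots,[a_N,\infty]$, on whose interiors $\dim\ker G(0,z)=1$; these intervals are called rods. *)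

theory Defs
  imports "HOL-Analysis.Analysis"
begin

definition ker_dim :: "real^'n^'n \<Rightarrow> nat" where
  "ker_dim A = dim {x :: real^'n. A *v x = 0}"

definition field_eq ::
  "real \<Rightarrow> real^'n^'n \<Rightarrow> real^'n^'n \<Rightarrow> real^'n^'n \<Rightarrow> real^'n^'n \<Rightarrow> real^'n^'n \<Rightarrow> bool" where
  "field_eq r A Ar Az Arr Azz \<longleftrightarrow>
     matrix_inv A ** (Arr + (1 / r) *\<^sub>R Ar + Azz)
       = (matrix_inv A ** Ar) ** (matrix_inv A ** Ar) + (matrix_inv A ** Az) ** (matrix_inv A ** Az)"

definition discrete_set :: "real set \<Rightarrow> bool" where
  "discrete_set S \<longleftrightarrow> (\<forall>z. \<exists>e>0. \<forall>w\<in>S. w \<noteq> z \<longrightarrow> \<bar>w - z\<bar> \<ge> e)"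

end

theory Submission
  imports Defs
begin

text \<open>
  Let u span the kernel of G(0, z) on the rod. Since |det G| = r^2, the matrix r^2 G^{-1} is up to
  sign the adjugate of G, which tends to c u u^T with c \<noteq> 0 as r \<rightarrow> 0. Multiplied by r^2 G, the
  field equation reads G_r (r^2 G^{-1}) G_r + G_z (r^2 G^{-1}) G_z = r^2 G_rr + r G_r + r^2 G_zz, whose
  right-hand side tends to 0 where the derivatives stay bounded; taking traces gives G_z(r, z) u \<rightarrow> 0.
  A second-order Taylor expansion in z then yields |G(0, t) u| = O((z - t)^2), so the kernel
  projector u u^T has derivative zero off a discrete set of z; being continuous, it is constant along
  the rod. An orthogonal matrix sending the k-th basis vector to this common kernel vector makes the
  k-th row of the conjugated G(0, z) vanish, also at the ends of the rod by continuity.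
\<close>

section \<open>Outer products and limits of matrices\<close>

definition outer :: "real^'m \<Rightarrow> real^'n \<Rightarrow> real^'n^'m" where
  "outer x y = (\<chi> i j. x $ i * y $ j)"

lemma outer_mult_vector: "outer x y *v v = (y \<bullet> v) *\<^sub>R x"
  by (simp add: outer_def matrix_vector_mult_def vec_eq_iff inner_vec_def sum_distrib_left mult_ac)

lemma matrix_mul_outer: "A ** outer x y = outer (A *v x) y"
  by (simp add: outer_def matrix_matrix_mult_def matrix_vector_mult_def vec_eq_iff
      sum_distrib_left mult_ac)

lemma outer_mul_matrix: "outer x y ** B = outer x (transpose B *v y)"
  by (simp add: outer_def matrix_matrix_mult_def matrix_vector_mult_def transpose_def vec_eq_iff
      sum_distrib_left mult_ac)

lemma outer_scaleR: "outer (a *\<^sub>R x) (b *\<^sub>R y) = (a * b) *\<^sub>R outer x y"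
  by (simp add: outer_def vec_eq_iff mult_ac)

lemma outer_uminus_self: "outer (- x) (- x) = outer x x"
  by (simp add: outer_def)

lemma outer_self_diff: "outer x x - outer y y = outer x (x - y) + outer (x - y) y"
  by (simp add: outer_def vec_eq_iff algebra_simps)

lemma trace_outer: "trace (outer x y) = x \<bullet> y"
  by (simp add: outer_def trace_def inner_vec_def)

lemma norm_outer: "norm (outer x y) = norm x * norm y"
proof -
  have row: "outer x y $ i = x $ i *\<^sub>R y" for i
    by (simp add: outer_def vec_eq_iff)
  have "norm (outer x y) = L2_set (\<lambda>i. norm y * \<bar>x $ i\<bar>) UNIV"
    unfolding norm_vec_def[of "outer x y"] row by (simp add: mult.commute)
  also have "\<dots> = norm x * norm y"
    by (simp add: L2_set_right_distrib[symmetric] norm_vec_def)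
  finally show ?thesis .
qed

lemma norm_matrix_vector_mult_le:
  fixes A :: "real^'n^'m"
  shows "norm (A *v x) \<le> norm A * norm x"
proof -
  have "norm (A *v x) = L2_set (\<lambda>i. \<bar>A $ i \<bullet> x\<bar>) UNIV"
    by (simp add: norm_vec_def matrix_vector_mult_def inner_vec_def)
  also have "\<dots> \<le> L2_set (\<lambda>i. norm x * norm (A $ i)) UNIV"
    by (intro L2_set_mono)
      (simp_all add: Cauchy_Schwarz_ineq2[of "A $ _" x, unfolded mult.commute[of "norm (A $ _)"]])
  also have "\<dots> = norm A * norm x"
    by (simp add: L2_set_right_distrib[symmetric] norm_vec_def)
  finally show ?thesis .
qed

lemma bounded_bilinear_matrix_matrix_mult:
  "bounded_bilinear ((**) :: real^'n^'m \<Rightarrow> real^'p^'n \<Rightarrow> real^'p^'m)"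
  unfolding bilinear_conv_bounded_bilinear[symmetric] bilinear_def
  by (auto intro!: linearI simp: matrix_matrix_mult_def vec_eq_iff sum.distrib
      distrib_left distrib_right sum_distrib_left mult_ac)

lemma bounded_linear_matrix_vector_mult_left: "bounded_linear (\<lambda>A :: real^'n^'m. A *v u)"
  unfolding linear_conv_bounded_linear[symmetric]
  by (rule linearI) (simp_all add: matrix_vector_mult_add_rdistrib scaleR_matrix_vector_assoc)

lemma bounded_linear_transpose: "bounded_linear (transpose :: real^'n^'m \<Rightarrow> real^'m^'n)"
  unfolding linear_conv_bounded_linear[symmetric]
  by (rule linearI) (simp_all add: transpose_def vec_eq_iff)

lemma tendsto_matrix_sandwich:
  fixes N :: "'a \<Rightarrow> real^'n^'m" and P :: "real^'m^'p" and Q :: "real^'q^'n"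
  assumes "(N \<longlongrightarrow> N0) F"
  shows "((\<lambda>x. P ** N x ** Q) \<longlongrightarrow> P ** N0 ** Q) F"
  by (intro bounded_bilinear.tendsto[OF bounded_bilinear_matrix_matrix_mult] tendsto_const assms)

lemma tendsto_zero_bounded_matrix_sandwich:
  fixes Z :: "'a \<Rightarrow> real^'n^'m" and P :: "'a \<Rightarrow> real^'m^'p" and Q :: "'a \<Rightarrow> real^'q^'n"
  assumes "eventually (\<lambda>x. norm (P x) \<le> B \<and> norm (Q x) \<le> B) F" and "(Z \<longlongrightarrow> 0) F"
  shows "((\<lambda>x. P x ** Z x ** Q x) \<longlongrightarrow> 0) F"
proof -
  note bb = bounded_bilinear_matrix_matrix_mult
  have "Bfun P F" "Bfun Q F"
    using assms(1) by (auto intro: BfunI elim: eventually_mono)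
  moreover have "Zfun Z F" using assms(2) by (simp add: tendsto_Zfun_iff)
  ultimately have "Zfun (\<lambda>x. P x ** Z x ** Q x) F"
    by (intro bounded_bilinear.Zfun_prod_Bfun[OF bb] bounded_bilinear.Bfun_prod_Zfun[OF bb])
  then show ?thesis by (simp add: tendsto_Zfun_iff)
qed

lemma tendsto_zero_bounded_sandwich_limit:
  fixes N :: "'a \<Rightarrow> real^'n^'n" and P Q :: "'a \<Rightarrow> real^'n^'n"
  assumes N: "(N \<longlongrightarrow> N0) F" and PQ: "eventually (\<lambda>x. norm (P x) \<le> B \<and> norm (Q x) \<le> B) F"
    and lim: "((\<lambda>x. P x ** N x ** P x + Q x ** N x ** Q x) \<longlongrightarrow> 0) F"
  shows "((\<lambda>x. P x ** N0 ** P x + Q x ** N0 ** Q x) \<longlongrightarrow> 0) F"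
proof -
  note bb = bounded_bilinear_matrix_matrix_mult
  have "((\<lambda>x. P x ** (N x - N0) ** P x + Q x ** (N x - N0) ** Q x) \<longlongrightarrow> 0) F"
    using PQ N by (intro tendsto_add_zero tendsto_zero_bounded_matrix_sandwich[where B=B])
      (auto elim: eventually_mono simp: LIM_zero)
  from tendsto_diff[OF lim this] show ?thesis
    by (simp add: bounded_bilinear.diff_left[OF bb] bounded_bilinear.diff_right[OF bb])
qed

lemma tendsto_zero_scaleR_bounded:
  fixes f :: "'a \<Rightarrow> 'b::real_normed_vector"
  assumes "eventually (\<lambda>x. norm (f x) \<le> B) F" and "(g \<longlongrightarrow> 0) F"
  shows "((\<lambda>x. g x *\<^sub>R f x) \<longlongrightarrow> 0) F"
proof -
  have "Zfun (\<lambda>x. g x *\<^sub>R f x) F"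
    using assms by (intro bounded_bilinear.Zfun_prod_Bfun[OF bounded_bilinear_scaleR] BfunI)
      (simp_all add: tendsto_Zfun_iff)
  then show ?thesis by (simp add: tendsto_Zfun_iff)
qed

lemma tendsto_trace:
  fixes A :: "'a \<Rightarrow> real^'n^'n"
  assumes "(A \<longlongrightarrow> A0) F"
  shows "((\<lambda>x. trace (A x)) \<longlongrightarrow> trace A0) F"
  unfolding trace_def by (intro tendsto_intros tendsto_vec_nth assms)

lemma tendsto_zero_if_sum_outer_squares_tendsto_zero:
  fixes p q :: "'a \<Rightarrow> real^'n"
  assumes "((\<lambda>x. outer (p x) (p x) + outer (q x) (q x)) \<longlongrightarrow> 0) F"
  shows "(p \<longlongrightarrow> 0) F"
proof -
  from tendsto_trace[OF assms] have "((\<lambda>x. (norm (p x))\<^sup>2 + (norm (q x))\<^sup>2) \<longlongrightarrow> 0) F"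
    by (simp add: trace_add trace_outer power2_norm_eq_inner trace_0[unfolded mat_0])
  then have "((\<lambda>x. (norm (p x))\<^sup>2) \<longlongrightarrow> 0) F"
    by (rule Lim_null_comparison[rotated]) auto
  from tendsto_real_sqrt[OF this] have "((\<lambda>x. norm (p x)) \<longlongrightarrow> 0) F"
    by simp
  then show ?thesis by (rule tendsto_norm_zero_iff[THEN iffD1])
qed

section \<open>Matrices with a one-dimensional kernel\<close>

definition unit_kernel_basis :: "real^'n^'m \<Rightarrow> real^'n \<Rightarrow> bool" where
  "unit_kernel_basis A u \<longleftrightarrow>
     norm u = 1 \<and> A *v u = 0 \<and> (\<forall>x. A *v x = 0 \<longrightarrow> x = (u \<bullet> x) *\<^sub>R u)"

lemma unit_kernel_basis_if_ker_dim_1: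
  fixes A :: "real^'n^'n"
  assumes "ker_dim A = 1"
  obtains u where "unit_kernel_basis A u"
proof -
  let ?V = "{x :: real^'n. A *v x = 0}"
  obtain B where B: "B \<subseteq> ?V" "independent B" "?V \<subseteq> span B" "card B = dim ?V"
    using basis_exists by blast
  then obtain b where b: "B = {b}"
    using assms unfolding ker_dim_def by (metis card_1_singletonE)
  define u where "u = b /\<^sub>R norm b"
  have "b \<noteq> 0" using B(2) b by auto
  then have "norm u = 1" by (simp add: u_def)
  moreover have "A *v u = 0"
    using B(1) b by (simp add: u_def matrix_vector_mult_scaleR)
  moreover have "x = (u \<bullet> x) *\<^sub>R u" if "A *v x = 0" for x
  proof -
    have "x \<in> span {b}" using B(3) b that by auto
    then obtain c where "x = c *\<^sub>R b" by (auto simp: span_singleton)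
    then have "x = (c * norm b) *\<^sub>R u" using \<open>b \<noteq> 0\<close> by (simp add: u_def)
    with \<open>norm u = 1\<close> show ?thesis by (simp add: dot_square_norm)
  qed
  ultimately show ?thesis using that unfolding unit_kernel_basis_def by blast
qed

lemma unit_kernel_basis_bounded_below:
  fixes A :: "real^'n^'n"
  assumes sym: "transpose A = A" and u: "unit_kernel_basis A u"
  obtains m where "m > 0" "\<And>x. m * norm (x - (u \<bullet> x) *\<^sub>R u) \<le> norm (A *v x)"
proof -
  have Au: "A *v u = 0" and uu: "u \<bullet> u = 1"
    using u unfolding unit_kernel_basis_def by (auto simp: dot_square_norm)
  have uA: "u \<bullet> (A *v y) = 0" for y
  proof -
    have "u \<bullet> (A *v y) = (transpose A *v u) \<bullet> y" by (simp add: dot_lmul_matrix)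
    then show ?thesis by (simp add: sym Au)
  qed
  define f where "f y = A *v y + (u \<bullet> y) *\<^sub>R u" for y
  have lin: "linear f"
    unfolding f_def by (rule linearI)
      (simp_all add: matrix_vector_right_distrib inner_add_right algebra_simps
        matrix_vector_mult_scaleR)
  have "y = 0" if "f y = 0" for y
  proof -
    have "u \<bullet> y = u \<bullet> f y" by (simp add: f_def inner_add_right uA uu)
    then have "u \<bullet> y = 0" using that by simp
    moreover from this have "A *v y = 0" using that by (simp add: f_def)
    ultimately show "y = 0" using u unfolding unit_kernel_basis_def by auto
  qed
  then have "inj f" using linear_injective_0[OF lin] by blast
  then obtain m where m: "m > 0" "\<And>y. m * norm y \<le> norm (f y)"
    using linear_inj_bounded_below_pos[OF lin] by blast
  have "f (x - (u \<bullet> x) *\<^sub>R u) = A *v x" for x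
    by (simp add: f_def Au uu inner_diff_right matrix_vector_mult_diff_distrib
        matrix_vector_mult_scaleR)
  with m that show ?thesis by metis
qed

lemma norm_outer_self_diff_le:
  fixes x y :: "real^'n"
  assumes "norm x \<le> 1" "norm y \<le> 1"
  shows "norm (outer x x - outer y y) \<le> 2 * norm (x - y)"
proof -
  have "norm (outer x x - outer y y) \<le> norm x * norm (x - y) + norm (x - y) * norm y"
    unfolding outer_self_diff by (metis norm_outer norm_triangle_ineq)
  also have "\<dots> \<le> 1 * norm (x - y) + norm (x - y) * 1"
    using assms by (intro add_mono mult_mono) auto
  finally show ?thesis by simp
qed

lemma norm_outer_self_diff_le_orthogonal_part:
  fixes x u :: "real^'n"
  assumes x: "norm x = 1" and u: "norm u = 1"
  shows "norm (outer x x - outer u u) \<le> 4 * norm (x - (u \<bullet> x) *\<^sub>R u)"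
proof -
  define c where "c = u \<bullet> x"
  obtain v where v: "outer v v = outer u u" "norm v = 1" "v \<bullet> x = \<bar>c\<bar>"
  proof (cases "c \<ge> 0")
    case True
    then show ?thesis using that[of u] u by (simp add: c_def)
  next
    case False
    then show ?thesis using that[of "- u"] u by (simp add: c_def outer_uminus_self)
  qed
  have "\<bar>c\<bar> \<le> 1" using Cauchy_Schwarz_ineq2[of u x] x u by (simp add: c_def)
  then have "c\<^sup>2 \<le> \<bar>c\<bar>"
    by (simp add: power2_eq_square) (metis abs_ge_zero abs_mult_self_eq mult_left_le)
  have "x \<bullet> x = 1" "v \<bullet> v = 1" "u \<bullet> u = 1" using x v u by (simp_all add: dot_square_norm)
  then have "(norm (x - v))\<^sup>2 = 2 - 2 * \<bar>c\<bar>"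
    using v
    by (simp add: power2_norm_eq_inner inner_diff_left inner_diff_right inner_commute[of x v])
  also have "\<dots> \<le> 4 * (1 - c\<^sup>2)"
    using \<open>c\<^sup>2 \<le> \<bar>c\<bar>\<close> \<open>\<bar>c\<bar> \<le> 1\<close> by (simp add: algebra_simps)
  also have "1 - c\<^sup>2 = (x - c *\<^sub>R u) \<bullet> (x - c *\<^sub>R u)"
    using \<open>x \<bullet> x = 1\<close> \<open>u \<bullet> u = 1\<close>
    by (simp add: inner_diff_left inner_diff_right inner_commute[of x u] c_def[symmetric]
        power2_eq_square)
  also have "\<dots> = (norm (x - c *\<^sub>R u))\<^sup>2" by (rule power2_norm_eq_inner[symmetric])
  also have "4 * \<dots> = (2 * norm (x - c *\<^sub>R u))\<^sup>2" by (simp add: power_mult_distrib)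
  finally have "norm (x - v) \<le> 2 * norm (x - c *\<^sub>R u)"
    by (rule power2_le_imp_le) simp
  moreover have "norm (outer x x - outer u u) \<le> 2 * norm (x - v)"
    using norm_outer_self_diff_le[of x v] x v by simp
  ultimately show ?thesis by (simp add: c_def)
qed

lemma outer_dist_le_matrix_residual:
  fixes A :: "real^'n^'n"
  assumes sym: "transpose A = A" and u: "unit_kernel_basis A u"
  obtains C where "C \<ge> 0" "\<And>x. norm x = 1 \<Longrightarrow> norm (outer x x - outer u u) \<le> C * norm (A *v x)"
proof -
  obtain m where m: "m > 0" "\<And>x. m * norm (x - (u \<bullet> x) *\<^sub>R u) \<le> norm (A *v x)"
    using unit_kernel_basis_bounded_below[OF assms] by blast
  show ?thesis
  proof
    show "4 / m \<ge> 0" using m by simp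
    fix x :: "real^'n" assume x: "norm x = 1"
    have "norm u = 1" using u unfolding unit_kernel_basis_def by simp
    then have "norm (outer x x - outer u u) \<le> 4 / m * (m * norm (x - (u \<bullet> x) *\<^sub>R u))"
      using norm_outer_self_diff_le_orthogonal_part[OF x] m(1) by simp
    also have "\<dots> \<le> 4 / m * norm (A *v x)"
      using m by (intro mult_left_mono) auto
    finally show "norm (outer x x - outer u u) \<le> 4 / m * norm (A *v x)" .
  qed
qed

definition kernel_projector :: "real^'n^'n \<Rightarrow> real^'n^'n" where
  "kernel_projector A = (let u = SOME u. unit_kernel_basis A u in outer u u)"

lemma kernel_projector_eq:
  assumes u: "unit_kernel_basis A u"
  shows "kernel_projector A = outer u u"
proof -
  define v where "v = (SOME v. unit_kernel_basis A v)"
  have v: "unit_kernel_basis A v" unfolding v_def using u by (rule someI)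
  define c where "c = u \<bullet> v"
  have v_eq: "v = c *\<^sub>R u" using u v unfolding unit_kernel_basis_def c_def by blast
  then have "\<bar>c\<bar> = 1" using u v unfolding unit_kernel_basis_def by auto
  then have "c * c = 1" by (metis abs_mult_self_eq mult.right_neutral)
  then have "outer v v = outer u u" using v_eq by (simp add: outer_scaleR)
  then show ?thesis by (simp add: kernel_projector_def v_def)
qed

lemma kernel_projector_dist_le:
  fixes A :: "real^'n^'n"
  assumes sym: "transpose A = A" and ker: "ker_dim A = 1"
  obtains C where "C \<ge> 0"
    "\<And>B w. unit_kernel_basis B w \<Longrightarrow>
      norm (kernel_projector B - kernel_projector A) \<le> C * norm (A *v w)"
proof -
  obtain u where u: "unit_kernel_basis A u" using ker by (rule unit_kernel_basis_if_ker_dim_1)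
  obtain C where C: "C \<ge> 0" "\<And>x. norm x = 1 \<Longrightarrow> norm (outer x x - outer u u) \<le> C * norm (A *v x)"
    using outer_dist_le_matrix_residual[OF sym u] by blast
  show ?thesis
  proof (rule that[OF C(1)])
    fix B :: "real^'n^'n" and w assume w: "unit_kernel_basis B w"
    then have "norm w = 1" by (simp add: unit_kernel_basis_def)
    then show "norm (kernel_projector B - kernel_projector A) \<le> C * norm (A *v w)"
      using C(2) by (simp add: kernel_projector_eq[OF w] kernel_projector_eq[OF u])
  qed
qed

lemma unit_kernel_basis_orthogonal_conj:
  fixes A L :: "real^'n^'n"
  assumes L: "orthogonal_matrix L" and u: "unit_kernel_basis A u"
  shows "unit_kernel_basis (transpose L ** A ** L) (transpose L *v u)"
proof -
  have LL: "L *v (transpose L *v y) = y" "transpose L *v (L *v y) = y" for y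
    using L unfolding orthogonal_matrix_def
    by (simp_all only: matrix_vector_mul_assoc matrix_vector_mul_lid)
  have inner: "(transpose L *v x) \<bullet> y = x \<bullet> (L *v y)" for x y
    by (simp add: dot_lmul_matrix)
  have "norm (transpose L *v u) = norm u"
    by (simp only: norm_eq_sqrt_inner inner LL)
  moreover have "(transpose L ** A ** L) *v (transpose L *v u) = 0"
    using u unfolding unit_kernel_basis_def
    by (simp only: matrix_vector_mul_assoc[symmetric] LL) simp
  moreover have "x = ((transpose L *v u) \<bullet> x) *\<^sub>R (transpose L *v u)"
    if "(transpose L ** A ** L) *v x = 0" for x
  proof -
    have "A *v (L *v x) = 0"
      using arg_cong[OF that, of "(*v) L"]
      by (simp only: matrix_vector_mul_assoc[symmetric] LL) simp
    with u have "L *v x = (u \<bullet> (L *v x)) *\<^sub>R u" unfolding unit_kernel_basis_def by blast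
    then have "transpose L *v (L *v x) = (u \<bullet> (L *v x)) *\<^sub>R (transpose L *v u)"
      by (metis matrix_vector_mult_scaleR)
    then show ?thesis by (simp only: LL inner)
  qed
  ultimately show ?thesis using u unfolding unit_kernel_basis_def by auto
qed

lemma symmetric_conj_row_zero:
  fixes A L :: "real^'n^'n"
  assumes "transpose A = A" and "A *v (L *v axis k 1) = 0"
  shows "(transpose L ** A ** L) $ k $ i = 0"
proof -
  define B where "B = transpose L ** A ** L"
  have "B *v axis k 1 = 0"
    using assms(2) by (simp add: B_def matrix_vector_mul_assoc[symmetric])
  then have "B $ i $ k = 0"
    by (metis matrix_vector_mult_basis column_def vec_lambda_beta zero_index)
  moreover have "transpose B = B"
    using assms(1) by (simp add: B_def matrix_transpose_mul matrix_mul_assoc)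
  then have "B $ k $ i = B $ i $ k"
    by (metis transpose_def vec_lambda_beta)
  ultimately show ?thesis by (simp add: B_def)
qed

section \<open>The adjugate near a symmetric matrix of corank one\<close>

lemma matrix_inv_det_nz:
  fixes A :: "real^'n^'n"
  assumes "det A \<noteq> 0"
  shows "A ** matrix_inv A = mat 1" "matrix_inv A ** A = mat 1"
proof -
  have "\<exists>A'. A ** A' = mat 1 \<and> A' ** A = mat 1"
    using assms invertible_det_nz unfolding invertible_def by blast
  then have "A ** matrix_inv A = mat 1 \<and> matrix_inv A ** A = mat 1"
    unfolding matrix_inv_def by (rule someI_ex)
  then show "A ** matrix_inv A = mat 1" "matrix_inv A ** A = mat 1" by auto
qed

lemma matrix_inv_unique:
  fixes A B :: "real^'n^'n"
  assumes "A ** B = mat 1" "B ** A = mat 1"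
  shows "matrix_inv A = B"
proof -
  have "det A \<noteq> 0"
    using assms invertible_det_nz unfolding invertible_def by blast
  then have "B ** (A ** matrix_inv A) = B" by (simp add: matrix_inv_det_nz)
  then show ?thesis using assms by (simp add: matrix_mul_assoc)
qed

lemma det_nz_if_trivial_kernel:
  fixes A :: "real^'n^'n"
  assumes "\<And>x. A *v x = 0 \<Longrightarrow> x = 0"
  shows "det A \<noteq> 0"
  using assms by (metis invertible_det_nz invertible_left_inverse matrix_left_invertible_ker)

definition adjugate :: "real^'n^'n \<Rightarrow> real^'n^'n" where
  "adjugate A = (\<chi> a b. det (\<chi> i j. if j = a then axis b 1 $ i else A $ i $ j))"

lemma det_scaleR_matrix_inv:
  fixes A :: "real^'n^'n"
  assumes "det A \<noteq> 0"
  shows "det A *\<^sub>R matrix_inv A = adjugate A"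
proof -
  have "A *v (matrix_inv A *v axis b 1) = axis b 1" for b
    using matrix_inv_det_nz[OF assms] by (simp add: matrix_vector_mul_assoc)
  then have "matrix_inv A *v axis b 1 = (\<chi> a. adjugate A $ a $ b / det A)" for b
    unfolding cramer[OF assms] by (simp add: adjugate_def)
  then have "matrix_inv A $ a $ b = adjugate A $ a $ b / det A" for a b
    by (metis matrix_vector_mult_basis column_def vec_lambda_beta)
  then show ?thesis using assms by (simp add: vec_eq_iff)
qed

lemma tendsto_det:
  fixes M :: "'a \<Rightarrow> real^'n^'n"
  assumes "(M \<longlongrightarrow> M0) F"
  shows "((\<lambda>x. det (M x)) \<longlongrightarrow> det M0) F"
  unfolding det_def by (intro tendsto_intros tendsto_vec_nth assms)

lemma tendsto_adjugate:
  fixes M :: "'a \<Rightarrow> real^'n^'n"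
  assumes "(M \<longlongrightarrow> M0) F"
  shows "((\<lambda>x. adjugate (M x)) \<longlongrightarrow> adjugate M0) F"
proof (rule vec_tendstoI)+
  fix a b
  have "((\<lambda>x. \<chi> i j. if j = a then axis b 1 $ i else M x $ i $ j) \<longlongrightarrow>
          (\<chi> i j. if j = a then axis b 1 $ i else M0 $ i $ j)) F"
    by (intro vec_tendstoI) (simp add: tendsto_vec_nth assms)
  then show "((\<lambda>x. adjugate (M x) $ a $ b) \<longlongrightarrow> adjugate M0 $ a $ b) F"
    unfolding adjugate_def by (simp add: tendsto_det)
qed

lemma adjugate_corank_one_axis:
  fixes A :: "real^'n^'n"
  assumes sym: "transpose A = A" and ker: "unit_kernel_basis A (axis k 1)"
  obtains d where "d \<noteq> 0" "adjugate A = d *\<^sub>R outer (axis k 1) (axis k 1)"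
proof
  have col: "A $ i $ k = 0" for i
    using ker unfolding unit_kernel_basis_def
    by (metis matrix_vector_mult_basis column_def vec_lambda_beta zero_index)
  have row: "A $ k $ i = 0" for i
    using col[of i] sym by (metis transpose_def vec_lambda_beta)
  have "(\<chi> i j. if j = k then axis k 1 $ i else A $ i $ j) = A + outer (axis k 1) (axis k 1)"
    by (simp add: outer_def axis_def col vec_eq_iff)
  then have "adjugate A $ k $ k = det (A + outer (axis k 1) (axis k 1))"
    by (simp add: adjugate_def)
  also have "\<dots> \<noteq> 0"
  proof (rule det_nz_if_trivial_kernel)
    fix x assume "(A + outer (axis k 1) (axis k 1)) *v x = 0"
    then have x: "A *v x + x $ k *\<^sub>R axis k 1 = 0"
      by (simp add: matrix_vector_mult_add_rdistrib outer_mult_vector inner_axis')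
    have "(A *v x) $ k = 0" by (simp add: matrix_vector_mult_def row)
    then have "x $ k = 0" using arg_cong[OF x, of "\<lambda>v. v $ k"] by simp
    with x have "A *v x = 0" by simp
    with ker have "x = x $ k *\<^sub>R axis k 1"
      unfolding unit_kernel_basis_def by (simp add: inner_axis')
    with \<open>x $ k = 0\<close> show "x = 0" by simp
  qed
  finally show "adjugate A $ k $ k \<noteq> 0" .
  have "adjugate A $ a $ b = 0" if "a \<noteq> k \<or> b \<noteq> k" for a b
  proof (cases "b = k")
    case True
    then have "column k (\<chi> i j. if j = a then axis b 1 $ i else A $ i $ j) = 0"
      using that by (simp add: column_def vec_eq_iff col)
    then show ?thesis unfolding adjugate_def vec_lambda_beta by (rule det_zero_column(1))
  next
    case False
    then have "row k (\<chi> i j. if j = a then axis b 1 $ i else A $ i $ j) = 0"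
      by (simp add: row_def vec_eq_iff row axis_def)
    then show ?thesis unfolding adjugate_def vec_lambda_beta by (rule det_zero_row(1))
  qed
  then show "adjugate A = adjugate A $ k $ k *\<^sub>R outer (axis k 1) (axis k 1)"
    by (auto simp: vec_eq_iff outer_def axis_def)
qed

lemma adjugate_orthogonal_conj:
  fixes L X :: "real^'n^'n"
  assumes L: "orthogonal_matrix L" and X: "det X \<noteq> 0"
  shows "adjugate (transpose L ** X ** L) = transpose L ** adjugate X ** L"
proof -
  have LL: "L ** (transpose L ** Y) = Y" "transpose L ** (L ** Y) = Y" for Y :: "real^'n^'n"
    using L unfolding orthogonal_matrix_def by (simp_all add: matrix_mul_assoc)
  have XX: "X ** (matrix_inv X ** Y) = Y" "matrix_inv X ** (X ** Y) = Y" for Y :: "real^'n^'n"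
    using matrix_inv_det_nz[OF X] by (simp_all add: matrix_mul_assoc)
  have det: "det (transpose L ** X ** L) = det X"
    using det_orthogonal_matrix[OF L] by (auto simp: det_mul det_transpose)
  have inv: "matrix_inv (transpose L ** X ** L) = transpose L ** matrix_inv X ** L"
    using L unfolding orthogonal_matrix_def
    by (intro matrix_inv_unique) (simp_all add: matrix_mul_assoc[symmetric] LL XX)
  have "adjugate (transpose L ** X ** L)
      = det (transpose L ** X ** L) *\<^sub>R matrix_inv (transpose L ** X ** L)"
    by (rule det_scaleR_matrix_inv[symmetric]) (simp add: det X)
  also have "\<dots> = transpose L ** (det X *\<^sub>R matrix_inv X) ** L"
    by (simp add: det inv matrix_scalar_ac scalar_matrix_assoc)
  finally show ?thesis by (simp add: det_scaleR_matrix_inv[OF X])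
qed

lemma det_scaleR_matrix_inv_tendsto_outer:
  fixes M :: "'a \<Rightarrow> real^'n^'n"
  assumes M: "(M \<longlongrightarrow> M0) F" and sym: "transpose M0 = M0" and ker: "unit_kernel_basis M0 u"
    and inv: "eventually (\<lambda>x. det (M x) \<noteq> 0) F"
  obtains c where "c \<noteq> 0" "((\<lambda>x. det (M x) *\<^sub>R matrix_inv (M x)) \<longlongrightarrow> c *\<^sub>R outer u u) F"
proof -
  fix k :: 'n
  obtain L where L: "orthogonal_matrix L" "L *v axis k 1 = u"
    using orthogonal_matrix_exists_basis ker unfolding unit_kernel_basis_def by metis
  have LL: "transpose L ** L = mat 1" "L ** transpose L = mat 1"
    using L(1) unfolding orthogonal_matrix_def by auto
  have Lu: "transpose L *v u = axis k 1"
    using L(2) LL(1) by (metis matrix_vector_mul_assoc matrix_vector_mul_lid)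
  define C where "C X = transpose L ** X ** L" for X :: "real^'n^'n"
  have "transpose (C M0) = C M0"
    using sym by (simp add: C_def matrix_transpose_mul matrix_mul_assoc)
  moreover have "unit_kernel_basis (C M0) (axis k 1)"
    using unit_kernel_basis_orthogonal_conj[OF L(1) ker] by (simp only: C_def Lu)
  ultimately obtain d where d: "d \<noteq> 0" "adjugate (C M0) = d *\<^sub>R outer (axis k 1) (axis k 1)"
    by (rule adjugate_corank_one_axis)
  have "((\<lambda>x. adjugate (C (M x))) \<longlongrightarrow> adjugate (C M0)) F"
    unfolding C_def by (intro tendsto_adjugate tendsto_matrix_sandwich M)
  moreover have "eventually (\<lambda>x. adjugate (C (M x)) = C (det (M x) *\<^sub>R matrix_inv (M x))) F"
    using inv
    by eventually_elim (simp add: C_def adjugate_orthogonal_conj[OF L(1)] det_scaleR_matrix_inv)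
  ultimately have "((\<lambda>x. C (det (M x) *\<^sub>R matrix_inv (M x))) \<longlongrightarrow> d *\<^sub>R outer (axis k 1) (axis k 1)) F"
    unfolding d(2) by (rule Lim_transform_eventually)
  then have "((\<lambda>x. L ** C (det (M x) *\<^sub>R matrix_inv (M x)) ** transpose L) \<longlongrightarrow>
      L ** (d *\<^sub>R outer (axis k 1) (axis k 1)) ** transpose L) F"
    by (rule tendsto_matrix_sandwich)
  moreover have "L ** C Y ** transpose L = Y" for Y
    by (simp add: C_def matrix_mul_assoc LL) (simp add: matrix_mul_assoc[symmetric] LL)
  moreover have "L ** outer (axis k 1) (axis k 1) ** transpose L = outer u u"
    using L(2) by (simp add: matrix_mul_outer outer_mul_matrix)
  then have "L ** (d *\<^sub>R outer (axis k 1) (axis k 1)) ** transpose L = d *\<^sub>R outer u u"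
    by (simp add: matrix_scalar_ac scalar_matrix_assoc[symmetric])
  ultimately show ?thesis using that d(1) by simp
qed

text \<open>
  Up to the sign of det (M x), the matrix sandwiched below is the adjugate of M x, which tends to
  c u u^T with c \<noteq> 0; for symmetric P this turns P (u u^T) P into the outer square of P u.
\<close>

lemma sandwich_vanishing_on_kernel:
  fixes M P Q :: "'a \<Rightarrow> real^'n^'n"
  assumes M: "(M \<longlongrightarrow> M0) F" and sym: "transpose M0 = M0" and ker: "unit_kernel_basis M0 u"
    and inv: "eventually (\<lambda>x. det (M x) \<noteq> 0) F"
    and PQ: "eventually (\<lambda>x. transpose (P x) = P x \<and> transpose (Q x) = Q x \<and>
                               norm (P x) \<le> B \<and> norm (Q x) \<le> B) F"
    and lim: "((\<lambda>x. P x ** (\<bar>det (M x)\<bar> *\<^sub>R matrix_inv (M x)) ** P x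
                 + Q x ** (\<bar>det (M x)\<bar> *\<^sub>R matrix_inv (M x)) ** Q x) \<longlongrightarrow> 0) F"
  shows "((\<lambda>x. P x *v u) \<longlongrightarrow> 0) F"
proof -
  define S where "S x Y = P x ** Y ** P x + Q x ** Y ** Q x" for x Y
  have S_scaleR: "S x (a *\<^sub>R Y) = a *\<^sub>R S x Y" for x a Y
    by (simp add: S_def matrix_scalar_ac scalar_matrix_assoc[symmetric] scaleR_add_right)
  obtain c where c: "c \<noteq> 0"
    and N: "((\<lambda>x. det (M x) *\<^sub>R matrix_inv (M x)) \<longlongrightarrow> c *\<^sub>R outer u u) F"
    using det_scaleR_matrix_inv_tendsto_outer[OF M sym ker inv] by blast
  have S_adj: "((\<lambda>x. S x (det (M x) *\<^sub>R matrix_inv (M x))) \<longlongrightarrow> 0) F"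
  proof (rule Lim_null_comparison)
    show "eventually (\<lambda>x. norm (S x (det (M x) *\<^sub>R matrix_inv (M x)))
                          \<le> norm (S x (\<bar>det (M x)\<bar> *\<^sub>R matrix_inv (M x)))) F"
      by (simp add: S_scaleR)
    show "((\<lambda>x. norm (S x (\<bar>det (M x)\<bar> *\<^sub>R matrix_inv (M x)))) \<longlongrightarrow> 0) F"
      using lim by (simp add: S_def tendsto_norm_zero_iff)
  qed
  have "eventually (\<lambda>x. norm (P x) \<le> B \<and> norm (Q x) \<le> B) F"
    using PQ by (rule eventually_mono) auto
  from tendsto_zero_bounded_sandwich_limit[OF N this S_adj[unfolded S_def]]
  have "((\<lambda>x. S x (c *\<^sub>R outer u u)) \<longlongrightarrow> 0) F" by (simp add: S_def)
  from tendsto_scaleR[OF tendsto_const this, of "1 / c"]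
  have "((\<lambda>x. S x (outer u u)) \<longlongrightarrow> 0) F" using c by (simp add: S_scaleR)
  moreover have "eventually (\<lambda>x. S x (outer u u)
                   = outer (P x *v u) (P x *v u) + outer (Q x *v u) (Q x *v u)) F"
    using PQ by eventually_elim (simp add: S_def matrix_mul_outer outer_mul_matrix)
  ultimately have "((\<lambda>x. outer (P x *v u) (P x *v u) + outer (Q x *v u) (Q x *v u)) \<longlongrightarrow> 0) F"
    by (rule Lim_transform_eventually)
  then show ?thesis by (rule tendsto_zero_if_sum_outer_squares_tendsto_zero)
qed

section \<open>Functions of one real variable\<close>

lemma second_order_remainder_le:
  fixes f f' f'' :: "real \<Rightarrow> 'a::real_normed_vector"
  assumes f': "\<And>s. s \<in> closed_segment t z \<Longrightarrow> (f has_vector_derivative f' s) (at s)"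
    and f'': "\<And>s. s \<in> closed_segment t z \<Longrightarrow> (f' has_vector_derivative f'' s) (at s)"
    and B: "\<And>s. s \<in> closed_segment t z \<Longrightarrow> norm (f'' s) \<le> B"
  shows "norm (f z - f t - (z - t) *\<^sub>R f' t) \<le> 3 * B * (z - t)\<^sup>2"
proof -
  let ?S = "closed_segment t z"
  have t: "t \<in> ?S" by simp
  then have "B \<ge> 0" using B[OF t] norm_ge_zero[of "f'' t"] by linarith
  have f'_slope: "norm (f' s - f' t) \<le> 3 * B * \<bar>z - t\<bar>" if s: "s \<in> ?S" for s
  proof -
    have lin: "norm (f' s - f' t - (s - t) *\<^sub>R f'' t) \<le> norm (s - t) * (2 * B)"
    proof (rule vector_differentiable_bound_linearization[OF _ _ _ t])
      show "(f' has_vector_derivative f'' x) (at x within ?S)" if "x \<in> ?S" for x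
        using f''[OF that] by (rule has_vector_derivative_at_within)
      show "closed_segment t s \<subseteq> ?S" using s by (simp add: subset_closed_segment)
      show "norm (f'' x - f'' t) \<le> 2 * B" if "x \<in> ?S" for x
        using norm_triangle_ineq4[of "f'' x" "f'' t"] B[OF that] B[OF t] by simp
    qed
    have "norm (f' s - f' t) \<le> norm (f' s - f' t - (s - t) *\<^sub>R f'' t) + norm ((s - t) *\<^sub>R f'' t)"
      using norm_triangle_ineq[of "f' s - f' t - (s - t) *\<^sub>R f'' t" "(s - t) *\<^sub>R f'' t"] by simp
    also have "\<dots> \<le> \<bar>s - t\<bar> * (2 * B) + \<bar>s - t\<bar> * B"
      using lin B[OF t] by (intro add_mono) (simp_all add: mult_left_mono)
    also have "\<dots> = 3 * B * \<bar>s - t\<bar>" by (simp add: algebra_simps)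
    also have "\<dots> \<le> 3 * B * \<bar>z - t\<bar>"
      using segment_bound(1)[OF s] \<open>B \<ge> 0\<close> by (intro mult_left_mono) auto
    finally show ?thesis .
  qed
  have "norm (f z - f t - (z - t) *\<^sub>R f' t) \<le> norm (z - t) * (3 * B * \<bar>z - t\<bar>)"
  proof (rule vector_differentiable_bound_linearization[OF _ subset_refl _ t])
    show "(f has_vector_derivative f' x) (at x within ?S)" if "x \<in> ?S" for x
      using f'[OF that] by (rule has_vector_derivative_at_within)
  qed (rule f'_slope)
  then show ?thesis by (simp add: power2_eq_square abs_mult_self_eq mult_ac)
qed

lemma has_derivative_zero_if_quadratic_bound:
  fixes f :: "real \<Rightarrow> 'a::real_normed_vector"
  assumes "d > 0" and bound: "\<And>z. \<bar>z - t\<bar> < d \<Longrightarrow> norm (f z - f t) \<le> K * (z - t)\<^sup>2"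
  shows "(f has_derivative (\<lambda>h. 0)) (at t within X)"
proof -
  have "eventually (\<lambda>z. norm ((1 / norm (z - t)) *\<^sub>R (f z - (f t + 0))) \<le> K * \<bar>z - t\<bar>)
      (at t within X)"
    unfolding eventually_at
  proof (intro exI[of _ d] conjI ballI impI)
    fix z assume "z \<noteq> t \<and> dist z t < d"
    then show "norm ((1 / norm (z - t)) *\<^sub>R (f z - (f t + 0))) \<le> K * \<bar>z - t\<bar>"
      using bound[of z]
      by (simp add: dist_real_def divide_le_eq power2_eq_square abs_mult_self_eq mult.assoc)
  qed (rule \<open>d > 0\<close>)
  moreover have "((\<lambda>z. K * \<bar>z - t\<bar>) \<longlongrightarrow> 0) (at t within X)"
    by (intro tendsto_eq_intros) auto
  ultimately have "((\<lambda>z. (1 / norm (z - t)) *\<^sub>R (f z - (f t + 0))) \<longlongrightarrow> 0) (at t within X)"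
    by (rule Lim_null_comparison)
  then show ?thesis unfolding has_derivative_within by (simp add: bounded_linear_zero)
qed

lemma transpose_vector_derivative_eq:
  fixes f :: "real \<Rightarrow> real^'n^'n"
  assumes f: "(f has_vector_derivative f') (at x)"
    and T: "open T" "x \<in> T" and sym: "\<And>s. s \<in> T \<Longrightarrow> transpose (f s) = f s"
  shows "transpose f' = f'"
proof -
  have "((\<lambda>s. transpose (f s)) has_vector_derivative transpose f') (at x)"
    using bounded_linear.has_vector_derivative[OF bounded_linear_transpose f] .
  then have "(f has_vector_derivative transpose f') (at x)"
    by (rule has_vector_derivative_transform_within_open[OF _ T]) (simp add: sym)
  from vector_derivative_unique_at[OF f this, symmetric] show ?thesis .
qed

lemma discrete_set_finite_Icc:
  assumes "discrete_set S"
  shows "finite (S \<inter> {a..b})"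
proof (rule ccontr)
  assume "infinite (S \<inter> {a..b})"
  moreover have "bounded (S \<inter> {a..b})" by (rule bounded_subset[OF bounded_closed_interval]) auto
  ultimately obtain x where x: "x islimpt (S \<inter> {a..b})"
    using bounded_infinite_imp_islimpt[OF order_refl] by blast
  obtain e where e: "e > 0" "\<And>w. w \<in> S \<Longrightarrow> w \<noteq> x \<Longrightarrow> \<bar>w - x\<bar> \<ge> e"
    using assms unfolding discrete_set_def by blast
  obtain y where y: "y \<in> S" "y \<noteq> x" "dist y x < e"
    using x e(1) unfolding islimpt_approachable by blast
  have "e \<le> \<bar>y - x\<bar>" using e(2) y(1,2) .
  with y(3) show False by (simp add: dist_real_def)
qed

lemma constant_if_has_derivative_zero_off_discrete:
  fixes f :: "real \<Rightarrow> 'a::banach"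
  assumes I: "is_interval I" and S: "discrete_set S" and cont: "continuous_on I f"
    and deriv: "\<And>x. x \<in> I - S \<Longrightarrow> (f has_derivative (\<lambda>h. 0)) (at x)"
    and ab: "a \<in> I" "b \<in> I"
  shows "f a = f b"
proof -
  define lo hi where "lo = min a b" and "hi = max a b"
  have "lo \<in> I" "hi \<in> I" using ab by (simp_all add: lo_def hi_def min_def max_def)
  have sub: "{lo..hi} \<subseteq> I"
  proof
    fix x assume "x \<in> {lo..hi}"
    then show "x \<in> I" using mem_is_interval_1_I[OF I \<open>lo \<in> I\<close> \<open>hi \<in> I\<close>] by simp
  qed
  have "f x = f lo" if "x \<in> {lo..hi}" for x
  proof (rule has_derivative_zero_unique_strong_interval[of "S \<inter> {lo..hi}" lo hi f "f lo"])
    show "finite (S \<inter> {lo..hi})" using S by (rule discrete_set_finite_Icc)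
    show "continuous_on {lo..hi} f" using cont sub by (rule continuous_on_subset)
    show "(f has_derivative (\<lambda>h. 0)) (at y within {lo..hi})" if "y \<in> {lo..hi} - S \<inter> {lo..hi}" for y
    proof -
      have "y \<in> I - S" using that sub by blast
      then show ?thesis by (rule has_derivative_at_withinI[OF deriv])
    qed
  qed (use that in auto)
  from this[of a] this[of b] show ?thesis by (simp add: lo_def hi_def)
qed

lemma open_ereal_interval: "open {x. z1 < ereal x \<and> ereal x < z2}"
  by (intro open_Collect_conj open_Collect_less continuous_intros)

lemma is_interval_ereal_interval: "is_interval {x. z1 < ereal x \<and> ereal x < z2}"
proof (unfold is_interval_1, intro ballI allI impI)
  fix a b x assume "a \<in> {x. z1 < ereal x \<and> ereal x < z2}" "b \<in> {x. z1 < ereal x \<and> ereal x < z2}"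
    and "a \<le> x \<and> x \<le> b"
  then have "z1 < ereal a" "ereal a \<le> ereal x" "ereal x \<le> ereal b" "ereal b < z2" by auto
  then have "z1 < ereal x" "ereal x < z2" by (metis less_le_trans, metis le_less_trans)
  then show "x \<in> {x. z1 < ereal x \<and> ereal x < z2}" by simp
qed

lemma ereal_Icc_subset_closure_Ioo:
  fixes z1 z2 :: ereal
  assumes "z1 < z2"
  shows "{x. z1 \<le> ereal x \<and> ereal x \<le> z2} \<subseteq> closure {x. z1 < ereal x \<and> ereal x < z2}"
    (is "_ \<subseteq> closure ?I")
proof
  fix z assume z: "z \<in> {x. z1 \<le> ereal x \<and> ereal x \<le> z2}"
  then have "z1 \<le> ereal z" "ereal z \<le> z2" by auto
  then consider "z1 < ereal z \<and> ereal z < z2" | "ereal z = z1" | "ereal z = z2"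
    using order_le_less by blast
  then show "z \<in> closure ?I"
  proof cases
    case 1
    then show ?thesis using closure_subset by fastforce
  next
    case 2
    then obtain q where q: "ereal z < ereal q" "ereal q < z2"
      using ereal_dense2[of "ereal z" z2] assms by auto
    have "{z<..<q} \<subseteq> ?I"
    proof
      fix x assume "x \<in> {z<..<q}"
      then have "ereal z < ereal x" "ereal x < ereal q" by auto
      then show "x \<in> ?I" using 2 less_trans[OF _ q(2)] by auto
    qed
    then have "closure {z<..<q} \<subseteq> closure ?I" by (rule closure_mono)
    then show ?thesis using q by auto
  next
    case 3
    then obtain p where p: "z1 < ereal p" "ereal p < ereal z"
      using ereal_dense2[of z1 "ereal z"] assms by auto
    have "{p<..<z} \<subseteq> ?I"
    proof
      fix x assume "x \<in> {p<..<z}"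
      then have "ereal p < ereal x" "ereal x < ereal z" by auto
      then show "x \<in> ?I" using 3 less_trans[OF p(1)] by auto
    qed
    then have "closure {p<..<z} \<subseteq> closure ?I" by (rule closure_mono)
    then show ?thesis using p by auto
  qed
qed

section \<open>Solutions of the field equation near the axis\<close>

lemma field_eq_times_r_squared:
  fixes A :: "real^'n^'n"
  assumes "r > 0" "det A \<noteq> 0" "field_eq r A Ar Az Arr Azz"
  shows "Ar ** (r\<^sup>2 *\<^sub>R matrix_inv A) ** Ar + Az ** (r\<^sup>2 *\<^sub>R matrix_inv A) ** Az
         = r\<^sup>2 *\<^sub>R Arr + r *\<^sub>R Ar + r\<^sup>2 *\<^sub>R Azz"
proof -
  define Ai where "Ai = matrix_inv A"
  have AAi: "A ** Ai = mat 1" unfolding Ai_def by (rule matrix_inv_det_nz(1)[OF assms(2)])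
  define Y where "Y = Arr + (1 / r) *\<^sub>R Ar + Azz"
  have "Ai ** Y = (Ai ** Ar) ** (Ai ** Ar) + (Ai ** Az) ** (Ai ** Az)"
    using assms(3) unfolding field_eq_def Ai_def Y_def .
  then have "A ** (Ai ** Y) = Ar ** Ai ** Ar + Az ** Ai ** Az"
    by (simp add: matrix_add_ldistrib matrix_mul_assoc AAi)
  then have "Y = Ar ** Ai ** Ar + Az ** Ai ** Az"
    by (simp add: matrix_mul_assoc AAi)
  moreover have "r\<^sup>2 *\<^sub>R Y = r\<^sup>2 *\<^sub>R Arr + r *\<^sub>R Ar + r\<^sup>2 *\<^sub>R Azz"
    using assms(1) by (simp add: Y_def scaleR_add_right power2_eq_square)
  ultimately show ?thesis
    by (simp add: Ai_def matrix_scalar_ac scalar_matrix_assoc[symmetric] scaleR_add_right)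
qed

locale axisymmetric_solution =
  fixes G Gr Gz Grr Gzz :: "real \<Rightarrow> real \<Rightarrow> real^'n^'n"
  assumes symmetric: "\<And>r z. r \<ge> 0 \<Longrightarrow> transpose (G r z) = G r z"
    and continuous: "continuous_on {p. fst p \<ge> 0} (\<lambda>p. G (fst p) (snd p))"
    and abs_det: "\<And>r z. r \<ge> 0 \<Longrightarrow> \<bar>det (G r z)\<bar> = r\<^sup>2"
    and deriv_r: "\<And>r z. r > 0 \<Longrightarrow> ((\<lambda>s. G s z) has_vector_derivative Gr r z) (at r)"
    and deriv_z: "\<And>r z. r > 0 \<Longrightarrow> ((\<lambda>t. G r t) has_vector_derivative Gz r z) (at z)"
    and deriv_zz: "\<And>r z. r > 0 \<Longrightarrow> ((\<lambda>t. Gz r t) has_vector_derivative Gzz r z) (at z)"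
    and field_equation: "\<And>r z. r > 0 \<Longrightarrow> field_eq r (G r z) (Gr r z) (Gz r z) (Grr r z) (Gzz r z)"
begin

definition bounded_near_axis :: "real \<Rightarrow> bool" where
  "bounded_near_axis z0 \<longleftrightarrow> (\<exists>e>0. \<exists>B. \<forall>r z. 0 < r \<and> r < e \<and> \<bar>z - z0\<bar> < e \<longrightarrow>
     norm (Gr r z) \<le> B \<and> norm (Gz r z) \<le> B \<and> norm (Grr r z) \<le> B \<and> norm (Gzz r z) \<le> B)"

lemma tendsto_axis: "((\<lambda>r. G r z) \<longlongrightarrow> G 0 z) (at_right 0)"
proof -
  have "continuous_on {0..} (\<lambda>r. (\<lambda>p. G (fst p) (snd p)) (r, z))"
    by (rule continuous_on_compose2[OF continuous]) (auto intro!: continuous_intros)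
  then have "((\<lambda>r. G r z) \<longlongrightarrow> G 0 z) (at 0 within {0..})"
    by (simp add: continuous_on_def)
  then show ?thesis by (rule tendsto_within_subset) auto
qed

lemma continuous_on_axis: "continuous_on UNIV (G 0)"
proof -
  have "continuous_on UNIV (\<lambda>z. (\<lambda>p. G (fst p) (snd p)) (0, z))"
    by (rule continuous_on_compose2[OF continuous]) (auto intro!: continuous_intros)
  then show ?thesis by simp
qed

lemma symmetric_Gr: "r > 0 \<Longrightarrow> transpose (Gr r z) = Gr r z"
  by (rule transpose_vector_derivative_eq[OF deriv_r open_greaterThan]) (auto simp: symmetric)

lemma symmetric_Gz: "r > 0 \<Longrightarrow> transpose (Gz r z) = Gz r z"
  by (rule transpose_vector_derivative_eq[OF deriv_z open_UNIV]) (auto simp: symmetric)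

lemma Gz_kernel_tendsto_zero:
  assumes bounded: "eventually (\<lambda>r. norm (Gr r z) \<le> B \<and> norm (Gz r z) \<le> B \<and>
                                    norm (Grr r z) \<le> B \<and> norm (Gzz r z) \<le> B) (at_right 0)"
    and ker: "unit_kernel_basis (G 0 z) u"
  shows "((\<lambda>r. Gz r z *v u) \<longlongrightarrow> 0) (at_right 0)"
proof (rule sandwich_vanishing_on_kernel[OF tendsto_axis symmetric[OF order_refl] ker])
  have pos: "eventually (\<lambda>r. r > 0) (at_right (0::real))"
    by (simp add: eventually_at_right_less)
  show "eventually (\<lambda>r. det (G r z) \<noteq> 0) (at_right 0)"
    using pos by eventually_elim (metis abs_det abs_zero less_imp_le power_not_zero less_irrefl)
  show "eventually (\<lambda>r. transpose (Gz r z) = Gz r z \<and> transpose (Gr r z) = Gr r z \<and>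
                        norm (Gz r z) \<le> B \<and> norm (Gr r z) \<le> B) (at_right 0)"
    using pos bounded by eventually_elim (simp add: symmetric_Gr symmetric_Gz)
  have "((\<lambda>r. r\<^sup>2 *\<^sub>R Grr r z + r *\<^sub>R Gr r z + r\<^sup>2 *\<^sub>R Gzz r z) \<longlongrightarrow> 0) (at_right 0)"
    using bounded
    by (intro tendsto_add_zero tendsto_zero_scaleR_bounded[where B=B])
       (auto elim: eventually_mono intro: tendsto_eq_intros)
  moreover have "eventually (\<lambda>r. r\<^sup>2 *\<^sub>R Grr r z + r *\<^sub>R Gr r z + r\<^sup>2 *\<^sub>R Gzz r z =
      Gz r z ** (\<bar>det (G r z)\<bar> *\<^sub>R matrix_inv (G r z)) ** Gz r z
      + Gr r z ** (\<bar>det (G r z)\<bar> *\<^sub>R matrix_inv (G r z)) ** Gr r z) (at_right 0)"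
    using pos
  proof eventually_elim
    case (elim r)
    then have "det (G r z) \<noteq> 0" using abs_det[of r z] by auto
    then show ?case
      using field_eq_times_r_squared[OF elim _ field_equation[OF elim]] elim
      by (simp add: abs_det add.commute)
  qed
  ultimately show "((\<lambda>r. Gz r z ** (\<bar>det (G r z)\<bar> *\<^sub>R matrix_inv (G r z)) ** Gz r z
      + Gr r z ** (\<bar>det (G r z)\<bar> *\<^sub>R matrix_inv (G r z)) ** Gr r z) \<longlongrightarrow> 0) (at_right 0)"
    by (rule Lim_transform_eventually)
qed

lemma axis_kernel_quadratic_bound:
  assumes e: "e > 0"
    and bound: "\<And>r s. 0 < r \<Longrightarrow> r < e \<Longrightarrow> s \<in> closed_segment t z \<Longrightarrow> norm (Gzz r s) \<le> B"
    and kernel: "G 0 t *v u = 0" and lim: "((\<lambda>r. Gz r t *v u) \<longlongrightarrow> 0) (at_right 0)"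
  shows "norm (G 0 z *v u) \<le> 3 * (B * norm u) * (z - t)\<^sup>2"
proof -
  note mult_u = bounded_linear_matrix_vector_mult_left[of u]
  define V where "V r = G r z *v u - G r t *v u - (z - t) *\<^sub>R (Gz r t *v u)" for r
  have "(V \<longlongrightarrow> G 0 z *v u - G 0 t *v u - (z - t) *\<^sub>R 0) (at_right 0)"
    unfolding V_def
    by (intro tendsto_diff tendsto_scaleR tendsto_const lim
        bounded_linear.tendsto[OF mult_u tendsto_axis])
  moreover have "eventually (\<lambda>r. norm (V r) \<le> 3 * (B * norm u) * (z - t)\<^sup>2) (at_right 0)"
    unfolding eventually_at_right_field
  proof (intro exI[of _ e] conjI allI impI)
    fix r :: real assume r: "0 < r" "r < e"
    show "norm (V r) \<le> 3 * (B * norm u) * (z - t)\<^sup>2"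
      unfolding V_def
    proof (rule second_order_remainder_le)
      show "((\<lambda>s. G r s *v u) has_vector_derivative Gz r s *v u) (at s)" for s
        by (rule bounded_linear.has_vector_derivative[OF mult_u deriv_z[OF r(1)]])
      show "((\<lambda>s. Gz r s *v u) has_vector_derivative Gzz r s *v u) (at s)" for s
        by (rule bounded_linear.has_vector_derivative[OF mult_u deriv_zz[OF r(1)]])
      show "norm (Gzz r s *v u) \<le> B * norm u" if "s \<in> closed_segment t z" for s
        using norm_matrix_vector_mult_le[of "Gzz r s" u] bound[OF r that]
        by (meson mult_right_mono norm_ge_zero order_trans)
    qed
  qed (rule e)
  ultimately show ?thesis
    using Lim_norm_ubound[OF trivial_limit_at_right_real] kernel by fastforce
qed

lemma kernel_drift_quadratic:
  assumes "bounded_near_axis t"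
  obtains d K where "d > 0"
    "\<And>z u. \<bar>z - t\<bar> < d \<Longrightarrow> unit_kernel_basis (G 0 z) u \<Longrightarrow> norm (G 0 t *v u) \<le> K * (z - t)\<^sup>2"
proof -
  obtain e B where e: "e > 0" and bd: "\<And>r z. 0 < r \<Longrightarrow> r < e \<Longrightarrow> \<bar>z - t\<bar> < e \<Longrightarrow>
      norm (Gr r z) \<le> B \<and> norm (Gz r z) \<le> B \<and> norm (Grr r z) \<le> B \<and> norm (Gzz r z) \<le> B"
    using assms unfolding bounded_near_axis_def by blast
  show ?thesis
  proof (rule that[OF e])
    fix z u assume z: "\<bar>z - t\<bar> < e" and u: "unit_kernel_basis (G 0 z) u"
    have "eventually (\<lambda>r. norm (Gr r z) \<le> B \<and> norm (Gz r z) \<le> B \<and>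
                           norm (Grr r z) \<le> B \<and> norm (Gzz r z) \<le> B) (at_right 0)"
      unfolding eventually_at_right_field using e z bd by blast
    then have lim: "((\<lambda>r. Gz r z *v u) \<longlongrightarrow> 0) (at_right 0)"
      using u by (rule Gz_kernel_tendsto_zero)
    have "norm (G 0 t *v u) \<le> 3 * (B * norm u) * (t - z)\<^sup>2"
    proof (rule axis_kernel_quadratic_bound[OF e _ _ lim])
      show "norm (Gzz r s) \<le> B" if "0 < r" "r < e" "s \<in> closed_segment z t" for r s
        using segment_bound(2)[OF that(3)] z bd[OF that(1,2)] by (simp add: abs_minus_commute)
      show "G 0 z *v u = 0" using u by (simp add: unit_kernel_basis_def)
    qed
    then show "norm (G 0 t *v u) \<le> 3 * B * (z - t)\<^sup>2"
      using u by (simp add: unit_kernel_basis_def power2_commute)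
  qed
qed

lemma isCont_kernel_projector:
  assumes I: "open I" "t \<in> I" and rod: "\<And>z. z \<in> I \<Longrightarrow> ker_dim (G 0 z) = 1"
  shows "isCont (\<lambda>z. kernel_projector (G 0 z)) t"
proof -
  obtain C where C: "C \<ge> 0" "\<And>B w. unit_kernel_basis B w \<Longrightarrow>
      norm (kernel_projector B - kernel_projector (G 0 t)) \<le> C * norm (G 0 t *v w)"
    using kernel_projector_dist_le[OF symmetric[OF order_refl] rod[OF I(2)]] by blast
  have "eventually (\<lambda>z. norm (kernel_projector (G 0 z) - kernel_projector (G 0 t))
                          \<le> C * norm (G 0 z - G 0 t)) (at t)"
    using eventually_at_in_open'[OF I]
  proof eventually_elim
    case (elim z)
    obtain w where w: "unit_kernel_basis (G 0 z) w"
      using rod[OF elim] by (rule unit_kernel_basis_if_ker_dim_1)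
    then have "G 0 t *v w = (G 0 t - G 0 z) *v w"
      by (simp add: unit_kernel_basis_def matrix_vector_mult_diff_rdistrib)
    then have "norm (G 0 t *v w) \<le> norm (G 0 z - G 0 t)"
      using norm_matrix_vector_mult_le[of "G 0 t - G 0 z" w] w
      by (simp add: unit_kernel_basis_def norm_minus_commute)
    then show ?case using C(2)[OF w] C(1) by (meson mult_left_mono order_trans)
  qed
  moreover have "((\<lambda>z. C * norm (G 0 z - G 0 t)) \<longlongrightarrow> 0) (at t)"
  proof -
    have "(G 0 \<longlongrightarrow> G 0 t) (at t)"
      using continuous_on_axis by (simp add: continuous_on_eq_continuous_at isCont_def)
    then show ?thesis by (intro tendsto_mult_right_zero tendsto_norm_zero LIM_zero)
  qed
  ultimately have "((\<lambda>z. kernel_projector (G 0 z) - kernel_projector (G 0 t)) \<longlongrightarrow> 0) (at t)"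
    by (rule Lim_null_comparison)
  then show ?thesis unfolding isCont_def by (rule LIM_zero_cancel)
qed

lemma kernel_projector_has_derivative_zero:
  assumes I: "open I" "t \<in> I" and rod: "\<And>z. z \<in> I \<Longrightarrow> ker_dim (G 0 z) = 1"
    and bounded: "bounded_near_axis t"
  shows "((\<lambda>z. kernel_projector (G 0 z)) has_derivative (\<lambda>h. 0)) (at t)"
proof -
  obtain C where C: "C \<ge> 0" "\<And>B w. unit_kernel_basis B w \<Longrightarrow>
      norm (kernel_projector B - kernel_projector (G 0 t)) \<le> C * norm (G 0 t *v w)"
    using kernel_projector_dist_le[OF symmetric[OF order_refl] rod[OF I(2)]] by blast
  obtain d K where d: "d > 0" and K: "\<And>z u. \<bar>z - t\<bar> < d \<Longrightarrow> unit_kernel_basis (G 0 z) u \<Longrightarrow>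
      norm (G 0 t *v u) \<le> K * (z - t)\<^sup>2"
    using kernel_drift_quadratic[OF bounded] by blast
  obtain e where e: "e > 0" "ball t e \<subseteq> I" using I by (rule openE)
  show ?thesis
  proof (rule has_derivative_zero_if_quadratic_bound[where d = "min d e" and K = "C * K"])
    show "min d e > 0" using d e by simp
    fix z assume z: "\<bar>z - t\<bar> < min d e"
    then have "z \<in> I" using e(2) by (auto simp: dist_real_def abs_minus_commute)
    then obtain w where w: "unit_kernel_basis (G 0 z) w"
      using rod by (blast intro: unit_kernel_basis_if_ker_dim_1)
    have "norm (kernel_projector (G 0 z) - kernel_projector (G 0 t)) \<le> C * norm (G 0 t *v w)"
      by (rule C(2)[OF w])
    also have "\<dots> \<le> C * (K * (z - t)\<^sup>2)"
      using K[OF _ w] z C(1) by (intro mult_left_mono) auto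
    finally show "norm (kernel_projector (G 0 z) - kernel_projector (G 0 t)) \<le> C * K * (z - t)\<^sup>2"
      by (simp add: mult.assoc)
  qed
qed

lemma common_kernel_vector:
  assumes I: "open I" "is_interval I" "a \<in> I" and rod: "\<And>z. z \<in> I \<Longrightarrow> ker_dim (G 0 z) = 1"
    and S: "discrete_set S" and bounded: "\<And>z. z \<in> I - S \<Longrightarrow> bounded_near_axis z"
  obtains u where "norm u = 1" "\<And>z. z \<in> I \<Longrightarrow> G 0 z *v u = 0"
proof -
  have const: "kernel_projector (G 0 z) = kernel_projector (G 0 a)" if "z \<in> I" for z
  proof (rule constant_if_has_derivative_zero_off_discrete[OF I(2) S _ _ that I(3)])
    show "continuous_on I (\<lambda>z. kernel_projector (G 0 z))"
      using isCont_kernel_projector[OF I(1) _ rod] by (simp add: continuous_at_imp_continuous_on)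
    show "((\<lambda>z. kernel_projector (G 0 z)) has_derivative (\<lambda>h. 0)) (at x)" if "x \<in> I - S" for x
      using that by (intro kernel_projector_has_derivative_zero[OF I(1) _ rod bounded]) auto
  qed
  obtain u where u: "unit_kernel_basis (G 0 a) u"
    using rod[OF I(3)] by (rule unit_kernel_basis_if_ker_dim_1)
  show ?thesis
  proof (rule that)
    show "norm u = 1" using u by (simp add: unit_kernel_basis_def)
    fix z assume z: "z \<in> I"
    obtain w where w: "unit_kernel_basis (G 0 z) w"
      using rod[OF z] by (rule unit_kernel_basis_if_ker_dim_1)
    have "outer w w = outer u u"
      using const[OF z] by (simp add: kernel_projector_eq[OF w] kernel_projector_eq[OF u])
    then have "outer w w *v u = outer u u *v u" by simp
    then have "u = (w \<bullet> u) *\<^sub>R w"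
      using u by (simp add: outer_mult_vector unit_kernel_basis_def dot_square_norm)
    then have "G 0 z *v u = (w \<bullet> u) *\<^sub>R (G 0 z *v w)"
      by (metis matrix_vector_mult_scaleR)
    then show "G 0 z *v u = 0" using w by (simp add: unit_kernel_basis_def)
  qed
qed

end

theorem theorem2:
  fixes G Gr Gz Grr Grz Gzz :: "real \<Rightarrow> real \<Rightarrow> real^'n^'n"
    and k :: 'n
    and z1 z2 :: ereal
    and S :: "real set"
  assumes sym: "\<And>r z. r \<ge> 0 \<Longrightarrow> transpose (G r z) = G r z"
    and cont: "continuous_on {p. fst p \<ge> 0} (\<lambda>p. G (fst p) (snd p))"
    and det: "\<And>r z. r \<ge> 0 \<Longrightarrow> \<bar>det (G r z)\<bar> = r\<^sup>2"
    and dGr: "\<And>r z. r > 0 \<Longrightarrow> ((\<lambda>s. G s z) has_vector_derivative Gr r z) (at r)"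
    and dGz: "\<And>r z. r > 0 \<Longrightarrow> ((\<lambda>t. G r t) has_vector_derivative Gz r z) (at z)"
    and dGrr: "\<And>r z. r > 0 \<Longrightarrow> ((\<lambda>s. Gr s z) has_vector_derivative Grr r z) (at r)"
    and dGrz: "\<And>r z. r > 0 \<Longrightarrow> ((\<lambda>t. Gr r t) has_vector_derivative Grz r z) (at z)"
    and dGzz: "\<And>r z. r > 0 \<Longrightarrow> ((\<lambda>t. Gz r t) has_vector_derivative Gzz r z) (at z)"
    and contd: "\<And>H. H \<in> {Gr, Gz, Grr, Grz, Gzz} \<Longrightarrow>
                  continuous_on {p. fst p > 0} (\<lambda>p. H (fst p) (snd p))"
    and eqn: "\<And>r z. r > 0 \<Longrightarrow> field_eq r (G r z) (Gr r z) (Gz r z) (Grr r z) (Gzz r z)"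
    and S_discrete: "discrete_set S"
    and finite_near_axis: "\<And>z0. z0 \<notin> S \<Longrightarrow> \<exists>e>0. \<exists>B. \<forall>r z H.
              0 < r \<and> r < e \<and> \<bar>z - z0\<bar> < e \<and> H \<in> {Gr, Gz, Grr, Grz, Gzz}
              \<longrightarrow> norm (H r z) \<le> B"
    and rod_lt: "z1 < z2"
    and rod: "\<And>z. z1 < ereal z \<Longrightarrow> ereal z < z2 \<Longrightarrow> ker_dim (G 0 z) = 1"
    and rod_end1: "\<And>a. z1 = ereal a \<Longrightarrow> ker_dim (G 0 a) \<noteq> 1"
    and rod_end2: "\<And>b. z2 = ereal b \<Longrightarrow> ker_dim (G 0 b) \<noteq> 1"
  shows "\<exists>\<Lambda> :: real^'n^'n. orthogonal_matrix \<Lambda> \<and>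
           (\<forall>z. z1 \<le> ereal z \<and> ereal z \<le> z2 \<longrightarrow>
              (\<forall>i. (transpose \<Lambda> ** G 0 z ** \<Lambda>) $ k $ i = 0))"
proof -
  interpret axisymmetric_solution G Gr Gz Grr Gzz
    using sym cont det dGr dGz dGzz eqn by unfold_locales
  define I where "I = {z. z1 < ereal z \<and> ereal z < z2}"
  obtain a where "a \<in> I" using ereal_dense2[OF rod_lt] by (auto simp: I_def)
  have "bounded_near_axis z" if "z \<notin> S" for z
    using finite_near_axis[OF that] unfolding bounded_near_axis_def by (metis insertCI)
  then obtain u where u: "norm u = 1" "\<And>z. z \<in> I \<Longrightarrow> G 0 z *v u = 0"
    using common_kernel_vector[OF open_ereal_interval is_interval_ereal_interval
        \<open>a \<in> I\<close>[unfolded I_def]]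
      rod S_discrete unfolding I_def by blast
  have "closed {z. G 0 z *v u = 0}"
    using bounded_linear.continuous_on[OF bounded_linear_matrix_vector_mult_left continuous_on_axis]
    by (intro closed_Collect_eq continuous_on_const)
  then have "closure I \<subseteq> {z. G 0 z *v u = 0}" using u(2) by (intro closure_minimal) auto
  then have kernel: "G 0 z *v u = 0" if "z1 \<le> ereal z" "ereal z \<le> z2" for z
    using ereal_Icc_subset_closure_Ioo[OF rod_lt] that unfolding I_def by blast
  obtain L where L: "orthogonal_matrix L" "L *v axis k 1 = u"
    using orthogonal_matrix_exists_basis[OF u(1)] by blast
  show ?thesis
    using L kernel symmetric_conj_row_zero[OF sym[OF order_refl]] by metis
qed

end
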